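(* Let $A$ and $G$ be selfadjoint operators in $\mathcal H$ with $\rho(AG)\neq\emptyset$ and $\rho(GA)\neq\emptyset$. Then the following are equivalent: (a) $AG$ is boundedly invertible; (b) $\operatorname{ran}(AG)=\mathcal H$; (c) $GA$ is boundedly invertible; (d) $\operatorname{ran}(GA)=\mathcal H$; (e) $A$ and $G$ are boundedly invertible. In particular, $\sigma(AG)=\sigma(GA)$.
   Context: $(\mathcal H,(\cdot,\cdot))$ is a complex Hilbert space; $A,G$ are possibly unbounded selfadjoint operators; $AG$, $GA$ are the operator products with natural domains. For a linear operator $S$, $\rho(S)$ is the set of $\lambda\in\mathbb C$ with $S-\lambda$ injective, surjective and with bounded everywhere defined inverse; $\sigma(S)=\mathbb C\setminus\rho(S)$; $S$ is boundedly invertible if $0\in\rho(S)$. *)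

theory Defs
  imports Complex_Main
begin

text \<open>A complex Hilbert space is modelled as a type 'a carrying an additive group
structure, a complex scalar multiplication sc and an inner product ip (linear in the
first argument, conjugate linear in the second), complete w.r.t. the induced norm.
Linear operators (possibly unbounded) are represented by their graphs.\<close>

definition hnorm :: "('a \<Rightarrow> 'a \<Rightarrow> complex) \<Rightarrow> 'a \<Rightarrow> real" where
  "hnorm ip x = sqrt (Re (ip x x))"

definition chilbert :: "(complex \<Rightarrow> 'a::ab_group_add \<Rightarrow> 'a) \<Rightarrow> ('a \<Rightarrow> 'a \<Rightarrow> complex) \<Rightarrow> bool" where
  "chilbert sc ip \<longleftrightarrow>
     (\<forall>x. sc 1 x = x) \<and>
     (\<forall>a b x. sc a (sc b x) = sc (a * b) x) \<and>
     (\<forall>a x y. sc a (x + y) = sc a x + sc a y) \<and>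
     (\<forall>a b x. sc (a + b) x = sc a x + sc b x) \<and>
     (\<forall>x y z. ip (x + y) z = ip x z + ip y z) \<and>
     (\<forall>a x y. ip (sc a x) y = a * ip x y) \<and>
     (\<forall>x y. ip y x = cnj (ip x y)) \<and>
     (\<forall>x. Im (ip x x) = 0 \<and> 0 \<le> Re (ip x x)) \<and>
     (\<forall>x. ip x x = 0 \<longrightarrow> x = 0) \<and>
     (\<forall>X :: nat \<Rightarrow> 'a.
        (\<forall>e>0. \<exists>N. \<forall>m\<ge>N. \<forall>n\<ge>N. hnorm ip (X m - X n) < e) \<longrightarrow>
        (\<exists>L. (\<lambda>n. hnorm ip (X n - L)) \<longlonglongrightarrow> 0))"

definition linear_op :: "(complex \<Rightarrow> 'a::ab_group_add \<Rightarrow> 'a) \<Rightarrow> ('a \<times> 'a) set \<Rightarrow> bool" where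
  "linear_op sc S \<longleftrightarrow>
     (0, 0) \<in> S \<and>
     (\<forall>x y u v. (x, y) \<in> S \<longrightarrow> (u, v) \<in> S \<longrightarrow> (x + u, y + v) \<in> S) \<and>
     (\<forall>a x y. (x, y) \<in> S \<longrightarrow> (sc a x, sc a y) \<in> S) \<and>
     (\<forall>x y z. (x, y) \<in> S \<longrightarrow> (x, z) \<in> S \<longrightarrow> y = z)"

definition dense_in :: "('a \<Rightarrow> 'a \<Rightarrow> complex) \<Rightarrow> 'a::ab_group_add set \<Rightarrow> bool" where
  "dense_in ip D \<longleftrightarrow> (\<forall>x. \<forall>e>0. \<exists>d\<in>D. hnorm ip (x - d) < e)"

definition adjoint :: "('a \<Rightarrow> 'a \<Rightarrow> complex) \<Rightarrow> ('a \<times> 'a) set \<Rightarrow> ('a \<times> 'a) set" where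
  "adjoint ip S = {(y, z). \<forall>x w. (x, w) \<in> S \<longrightarrow> ip w y = ip x z}"

definition selfadjoint :: "(complex \<Rightarrow> 'a::ab_group_add \<Rightarrow> 'a) \<Rightarrow> ('a \<Rightarrow> 'a \<Rightarrow> complex) \<Rightarrow> ('a \<times> 'a) set \<Rightarrow> bool" where
  "selfadjoint sc ip S \<longleftrightarrow> linear_op sc S \<and> dense_in ip (Domain S) \<and> adjoint ip S = S"

definition op_mult :: "('a \<times> 'a) set \<Rightarrow> ('a \<times> 'a) set \<Rightarrow> ('a \<times> 'a) set" where
  "op_mult A G = {(x, z). \<exists>y. (x, y) \<in> G \<and> (y, z) \<in> A}"

definition op_shift :: "(complex \<Rightarrow> 'a::ab_group_add \<Rightarrow> 'a) \<Rightarrow> ('a \<times> 'a) set \<Rightarrow> complex \<Rightarrow> ('a \<times> 'a) set" where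
  "op_shift sc S l = {(x, y - sc l x) | x y. (x, y) \<in> S}"

definition has_bounded_inverse :: "('a::ab_group_add \<Rightarrow> 'a \<Rightarrow> complex) \<Rightarrow> ('a \<times> 'a) set \<Rightarrow> bool" where
  "has_bounded_inverse ip T \<longleftrightarrow>
     (\<forall>x1 x2 y. (x1, y) \<in> T \<longrightarrow> (x2, y) \<in> T \<longrightarrow> x1 = x2) \<and>
     Range T = UNIV \<and>
     (\<exists>C. \<forall>x y. (x, y) \<in> T \<longrightarrow> hnorm ip x \<le> C * hnorm ip y)"

definition resolvent_set :: "(complex \<Rightarrow> 'a::ab_group_add \<Rightarrow> 'a) \<Rightarrow> ('a \<Rightarrow> 'a \<Rightarrow> complex) \<Rightarrow> ('a \<times> 'a) set \<Rightarrow> complex set" where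
  "resolvent_set sc ip S = {l. has_bounded_inverse ip (op_shift sc S l)}"

definition spectrum_op :: "(complex \<Rightarrow> 'a::ab_group_add \<Rightarrow> 'a) \<Rightarrow> ('a \<Rightarrow> 'a \<Rightarrow> complex) \<Rightarrow> ('a \<times> 'a) set \<Rightarrow> complex set" where
  "spectrum_op sc ip S = UNIV - resolvent_set sc ip S"

definition boundedly_invertible :: "(complex \<Rightarrow> 'a::ab_group_add \<Rightarrow> 'a) \<Rightarrow> ('a \<Rightarrow> 'a \<Rightarrow> complex) \<Rightarrow> ('a \<times> 'a) set \<Rightarrow> bool" where
  "boundedly_invertible sc ip S \<longleftrightarrow> 0 \<in> resolvent_set sc ip S"

end

theory Submission
  imports Defs
begin

text \<open>
  For a nonzero l in the resolvent
      set of AB, the explicit formula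
        (BA - l)^{-1} = Q + (l - mu)/l * (B (AB - l)^{-1} A Q - Q),  Q = (BA - mu)^{-1}
      shows that l lies in the resolvent set of BA.
  Hence, as soon as GA has one regular point, every regular point of AG is one of GA.  The main
  theorem applies this and the invertibility criterion at 0 in both directions A, G and G, A.
\<close>

section \<open>Hilbert space geometry\<close>

locale chilbert_space =
  fixes sc :: "complex \<Rightarrow> 'a::ab_group_add \<Rightarrow> 'a" and ip :: "'a \<Rightarrow> 'a \<Rightarrow> complex"
  assumes chilbert: "chilbert sc ip"
begin

abbreviation hn :: "'a \<Rightarrow> real" where "hn \<equiv> hnorm ip"

sublocale vs: vector_space sc
  using chilbert unfolding chilbert_def vector_space_def by (auto simp: algebra_simps)

lemma ip_add_l: "ip (x + y) z = ip x z + ip y z"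
  and ip_sc_l: "ip (sc a x) y = a * ip x y"
  and ip_cnj: "ip y x = cnj (ip x y)"
  and ip_self_Im: "Im (ip x x) = 0"
  and ip_self_Re: "0 \<le> Re (ip x x)"
  and ip_self_eq_0: "ip x x = 0 \<Longrightarrow> x = 0"
  using chilbert unfolding chilbert_def by blast+

lemma complete:
  "(\<forall>e>0. \<exists>N. \<forall>m\<ge>N. \<forall>n\<ge>N. hn (X m - X n) < e) \<Longrightarrow> \<exists>L. (\<lambda>n. hn (X n - L)) \<longlonglongrightarrow> 0"
  using chilbert unfolding chilbert_def by blast

lemma ip_add_r: "ip z (x + y) = ip z x + ip z y"
  by (metis ip_cnj ip_add_l complex_cnj_add)

lemma ip_sc_r: "ip x (sc a y) = cnj a * ip x y"
  by (metis ip_cnj ip_sc_l complex_cnj_mult)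

lemma ip_0_l [simp]: "ip 0 y = 0"
  by (metis ip_sc_l vs.scale_zero_left mult_zero_left)

lemma ip_0_r [simp]: "ip y 0 = 0"
  by (metis ip_cnj ip_0_l complex_cnj_zero)

lemma ip_diff_l: "ip (x - y) z = ip x z - ip y z"
  by (metis add_diff_cancel_right' diff_add_cancel ip_add_l)

lemma ip_diff_r: "ip z (x - y) = ip z x - ip z y"
  by (metis add_diff_cancel_right' diff_add_cancel ip_add_r)

lemma hn_nonneg [simp]: "0 \<le> hn x"
  unfolding hnorm_def using ip_self_Re[of x] by simp

lemma hn_0 [simp]: "hn 0 = 0"
  unfolding hnorm_def by simp

lemma hn_sq: "(hn x)\<^sup>2 = Re (ip x x)"
  unfolding hnorm_def using ip_self_Re[of x] by simp

lemma ip_self_hn: "ip x x = complex_of_real ((hn x)\<^sup>2)"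
  using ip_self_Im[of x] by (simp add: hn_sq complex_eq_iff)

lemma hn_eq_0 [simp]: "hn x = 0 \<longleftrightarrow> x = 0"
  using ip_self_hn[of x] ip_self_eq_0[of x] by (auto simp: hnorm_def)

lemma hn_pos: "x \<noteq> 0 \<Longrightarrow> 0 < hn x"
  using hn_nonneg[of x] hn_eq_0[of x] by linarith

lemma hn_sc: "hn (sc a x) = cmod a * hn x"
proof -
  have "ip (sc a x) (sc a x) = a * cnj a * ip x x"
    by (simp add: ip_sc_l ip_sc_r)
  also have "a * cnj a = complex_of_real ((cmod a)\<^sup>2)"
    by (rule complex_norm_square[symmetric])
  finally have "Re (ip (sc a x) (sc a x)) = (cmod a)\<^sup>2 * Re (ip x x)"
    by simp
  then show ?thesis
    unfolding hnorm_def by (simp add: real_sqrt_mult)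
qed

lemma hn_minus: "hn (- x) = hn x"
  using hn_sc[of "-1" x] by simp

lemma hn_commute: "hn (x - y) = hn (y - x)"
  by (metis hn_minus minus_diff_eq)

lemma hn_normalize: "x \<noteq> 0 \<Longrightarrow> hn (sc (of_real (1 / hn x)) x) = 1"
  using hn_pos[of x] by (simp add: hn_sc norm_divide)

lemma cauchy_schwarz: "cmod (ip x y) \<le> hn x * hn y"
proof (cases "y = 0")
  case True
  then show ?thesis by simp
next
  case False
  define t where "t = ip x y / ip y y"
  have yy: "ip y y = complex_of_real ((hn y)\<^sup>2)" by (rule ip_self_hn)
  have hy: "hn y > 0" using False by (rule hn_pos)
  have "ip (x - sc t y) (x - sc t y)
      = ip x x - cnj t * ip x y - t * cnj (ip x y) + t * cnj t * ip y y"
    by (simp add: ip_diff_l ip_diff_r ip_sc_l ip_sc_r algebra_simps flip: ip_cnj)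
  also have "\<dots> = ip x x - ip x y * cnj (ip x y) / ip y y"
    using hy yy by (simp add: t_def field_simps power2_eq_square)
  also have "\<dots> = complex_of_real ((hn x)\<^sup>2 - (cmod (ip x y))\<^sup>2 / (hn y)\<^sup>2)"
    by (simp add: ip_self_hn yy flip: complex_norm_square)
  finally have "0 \<le> (hn x)\<^sup>2 - (cmod (ip x y))\<^sup>2 / (hn y)\<^sup>2"
    using ip_self_Re[of "x - sc t y"] by simp
  then have "(cmod (ip x y))\<^sup>2 \<le> (hn x * hn y)\<^sup>2"
    using hy False by (simp add: divide_le_eq power_mult_distrib)
  then show ?thesis
    by (meson hn_nonneg mult_nonneg_nonneg power2_le_imp_le)
qed

lemma hn_triangle: "hn (x + y) \<le> hn x + hn y"
proof -
  have "ip (x + y) (x + y) = ip x x + ip y y + (ip x y + cnj (ip x y))"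
    by (simp add: ip_add_l ip_add_r algebra_simps flip: ip_cnj)
  then have "(hn (x + y))\<^sup>2 = (hn x)\<^sup>2 + (hn y)\<^sup>2 + 2 * Re (ip x y)"
    by (simp add: hn_sq)
  also have "Re (ip x y) \<le> hn x * hn y"
    using cauchy_schwarz[of x y] complex_Re_le_cmod[of "ip x y"] by linarith
  finally have "(hn (x + y))\<^sup>2 \<le> (hn x + hn y)\<^sup>2"
    by (simp add: power2_sum)
  then show ?thesis
    by (meson add_nonneg_nonneg hn_nonneg power2_le_imp_le)
qed

lemma hn_triangle_diff: "hn (x - z) \<le> hn (x - y) + hn (y - z)"
  using hn_triangle[of "x - y" "y - z"] by simp

lemma hn_diff_le: "hn (x - y) \<le> hn x + hn y"
  using hn_triangle[of x "- y"] by (simp add: hn_minus)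

section \<open>The uniform boundedness principle\<close>

definition bounded_functional :: "('a \<Rightarrow> complex) \<Rightarrow> bool" where
  "bounded_functional \<phi> \<longleftrightarrow>
     (\<forall>x y. \<phi> (x + y) = \<phi> x + \<phi> y) \<and> (\<forall>a x. \<phi> (sc a x) = a * \<phi> x) \<and>
     (\<exists>c. \<forall>x. cmod (\<phi> x) \<le> c * hn x)"

definition fnorm :: "('a \<Rightarrow> complex) \<Rightarrow> real" where
  "fnorm \<phi> = Sup ((\<lambda>x. cmod (\<phi> x)) ` {x. hn x \<le> 1})"

lemma bounded_functional_0: "bounded_functional \<phi> \<Longrightarrow> \<phi> 0 = 0"
  unfolding bounded_functional_def by (metis add_cancel_left_left add_0)

lemma fnorm_unit_ball:
  assumes "bounded_functional \<phi>"
  shows "bdd_above ((\<lambda>x. cmod (\<phi> x)) ` {x. hn x \<le> 1})"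
    and "hn x \<le> 1 \<Longrightarrow> cmod (\<phi> x) \<le> fnorm \<phi>"
proof -
  obtain c where c: "\<And>x. cmod (\<phi> x) \<le> c * hn x"
    using assms unfolding bounded_functional_def by blast
  have "cmod (\<phi> x) \<le> max c 0" if "hn x \<le> 1" for x
  proof -
    have "c * hn x \<le> max c 0 * hn x" by (simp add: mult_right_mono)
    also have "\<dots> \<le> max c 0" using that by (simp add: mult_left_le)
    finally show ?thesis using c[of x] by linarith
  qed
  then show bdd: "bdd_above ((\<lambda>x. cmod (\<phi> x)) ` {x. hn x \<le> 1})"
    by (intro bdd_aboveI[of _ "max c 0"]) auto
  show "hn x \<le> 1 \<Longrightarrow> cmod (\<phi> x) \<le> fnorm \<phi>"
    unfolding fnorm_def using bdd by (auto intro!: cSup_upper)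
qed

lemma fnorm_nonneg: "bounded_functional \<phi> \<Longrightarrow> 0 \<le> fnorm \<phi>"
  using fnorm_unit_ball(2)[of \<phi> 0] bounded_functional_0[of \<phi>] by simp

lemma fnorm_bound:
  assumes \<phi>: "bounded_functional \<phi>"
  shows "cmod (\<phi> x) \<le> fnorm \<phi> * hn x"
proof (cases "x = 0")
  case True
  then show ?thesis using bounded_functional_0[OF \<phi>] by simp
next
  case False
  have "cmod (\<phi> (sc (of_real (1 / hn x)) x)) \<le> fnorm \<phi>"
    using fnorm_unit_ball(2)[OF \<phi>] hn_normalize[OF False] by simp
  then have "cmod (\<phi> x) / hn x \<le> fnorm \<phi>"
    using \<phi> hn_pos[OF False] unfolding bounded_functional_def by (simp add: norm_mult norm_divide)
  then show ?thesis using hn_pos[OF False] by (simp add: divide_le_eq)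
qed

lemma fnorm_approx:
  assumes "bounded_functional \<phi>" and "t < fnorm \<phi>"
  obtains z where "hn z \<le> 1" and "t < cmod (\<phi> z)"
proof -
  have "{x. hn x \<le> 1} \<noteq> {}" by (auto intro!: exI[of _ 0])
  then show ?thesis
    using less_cSupD[of "(\<lambda>x. cmod (\<phi> x)) ` {x. hn x \<le> 1}" t] assms that
    unfolding fnorm_def by auto
qed

lemma sokal:
  assumes \<phi>: "bounded_functional \<phi>" and r: "0 \<le> r"
  obtains x' where "hn (x' - x) \<le> r * hn z" and "r * cmod (\<phi> z) \<le> cmod (\<phi> x')"
proof -
  have add: "\<phi> (x + y) = \<phi> x + \<phi> y" and hom: "\<phi> (sc a x) = a * \<phi> x" for x y a
    using \<phi> unfolding bounded_functional_def by blast+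
  have diff: "\<phi> (x - y) = \<phi> x - \<phi> y" for x y
    using add[of y "x - y"] by simp
  let ?p = "x + sc (of_real r) z" and ?m = "x - sc (of_real r) z"
  have "2 * of_real r * \<phi> z = \<phi> ?p - \<phi> ?m"
    by (simp add: add diff hom)
  then have "cmod (2 * of_real r * \<phi> z) \<le> cmod (\<phi> ?p) + cmod (\<phi> ?m)"
    by (metis norm_triangle_ineq4)
  then have "2 * (r * cmod (\<phi> z)) \<le> cmod (\<phi> ?p) + cmod (\<phi> ?m)"
    using r by (simp add: norm_mult)
  then consider "r * cmod (\<phi> z) \<le> cmod (\<phi> ?p)" | "r * cmod (\<phi> z) \<le> cmod (\<phi> ?m)"
    by linarith
  then show ?thesis
  proof cases
    case 1
    then show ?thesis by (intro that[of ?p]) (simp_all add: hn_sc r)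
  next
    case 2
    then show ?thesis by (intro that[of ?m]) (simp_all add: hn_sc hn_minus r)
  qed
qed

lemma geometric_steps_converge:
  assumes q: "0 \<le> q" "q < 1" and step: "\<And>n. hn (X (Suc n) - X n) \<le> c * q ^ n"
  obtains L where "\<And>n. hn (X n - L) \<le> c * q ^ n / (1 - q)"
proof -
  have dist: "hn (X m - X n) \<le> c * (q ^ n - q ^ m) / (1 - q)" if "n \<le> m" for m n
    using that
  proof (induction m rule: dec_induct)
    case base
    then show ?case by simp
  next
    case (step m)
    have "hn (X (Suc m) - X n) \<le> c * q ^ m + c * (q ^ n - q ^ m) / (1 - q)"
      using hn_triangle_diff[of "X (Suc m)" "X n" "X m"] step.IH assms(3)[of m] by linarith
    also have "\<dots> = c * (q ^ n - q ^ Suc m) / (1 - q)"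
      using q by (simp add: field_simps)
    finally show ?case .
  qed
  have c: "0 \<le> c"
    using order_trans[OF hn_nonneg step[of 0]] by simp
  have tail: "hn (X m - X n) \<le> c * q ^ n / (1 - q)" if "n \<le> m" for m n
  proof -
    have "c * (q ^ n - q ^ m) \<le> c * q ^ n"
      using c q by (simp add: mult_left_mono)
    then show ?thesis
      using dist[OF that] q by (smt (verit) divide_right_mono)
  qed
  have "\<exists>L. (\<lambda>n. hn (X n - L)) \<longlonglongrightarrow> 0"
  proof (rule complete, intro allI impI)
    fix e :: real assume "0 < e"
    have "(\<lambda>n. c * q ^ n / (1 - q)) \<longlonglongrightarrow> c * 0 / (1 - q)"
      using q by (intro tendsto_intros LIMSEQ_power_zero) auto
    then have "eventually (\<lambda>n. c * q ^ n / (1 - q) < e / 2) sequentially"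
      using \<open>0 < e\<close> by (auto dest: order_tendstoD(2)[of _ _ _ "e / 2"])
    then obtain N where N: "\<And>n. n \<ge> N \<Longrightarrow> c * q ^ n / (1 - q) < e / 2"
      unfolding eventually_sequentially by blast
    have "hn (X m - X n) < e" if "m \<ge> N" "n \<ge> N" for m n
      using hn_triangle_diff[of "X m" "X n" "X N"] hn_commute[of "X N" "X n"]
        tail[OF that(1)] tail[OF that(2)] N[OF order_refl] by argo
    then show "\<exists>N. \<forall>m\<ge>N. \<forall>n\<ge>N. hn (X m - X n) < e" by blast
  qed
  then obtain L where L: "(\<lambda>n. hn (X n - L)) \<longlonglongrightarrow> 0" by blast
  have "hn (X n - L) \<le> c * q ^ n / (1 - q)" for n
  proof -
    have "(\<lambda>m. c * q ^ n / (1 - q) + hn (X m - L)) \<longlonglongrightarrow> c * q ^ n / (1 - q)"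
      using tendsto_add[OF tendsto_const L] by simp
    moreover have "hn (X n - L) \<le> c * q ^ n / (1 - q) + hn (X m - L)" if "n \<le> m" for m
      using hn_triangle_diff[of "X n" L "X m"] hn_commute[of "X n" "X m"] tail[OF that] by linarith
    then have "\<exists>N. \<forall>m\<ge>N. hn (X n - L) \<le> c * q ^ n / (1 - q) + hn (X m - L)"
      by blast
    ultimately show ?thesis by (rule LIMSEQ_le_const)
  qed
  then show ?thesis by (rule that)
qed

lemma sokal_sequence:
  assumes \<phi>: "\<And>n. bounded_functional (\<phi> n)" and z: "\<And>n. hn (z n) \<le> 1"
  obtains L where "\<And>n. (1/3) ^ n * (cmod (\<phi> n (z n)) - fnorm (\<phi> n) / 2) \<le> cmod (\<phi> n L)"
proof -
  define step where "step n x =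
    (SOME x'. hn (x' - x) \<le> (1/3) ^ n \<and> (1/3) ^ n * cmod (\<phi> n (z n)) \<le> cmod (\<phi> n x'))"
    for n x
  have "hn (step n x - x) \<le> (1/3) ^ n \<and> (1/3) ^ n * cmod (\<phi> n (z n)) \<le> cmod (\<phi> n (step n x))"
    for n x
  proof -
    obtain x' where x': "hn (x' - x) \<le> (1/3) ^ n * hn (z n)"
      "(1/3) ^ n * cmod (\<phi> n (z n)) \<le> cmod (\<phi> n x')"
      using sokal[OF \<phi>[of n], of "(1/3) ^ n"] by auto
    moreover have "(1/3::real) ^ n * hn (z n) \<le> (1/3) ^ n"
      using z[of n] by (simp add: mult_left_le)
    ultimately have "hn (x' - x) \<le> (1/3) ^ n \<and> (1/3) ^ n * cmod (\<phi> n (z n)) \<le> cmod (\<phi> n x')"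
      by linarith
    then show ?thesis
      unfolding step_def by (rule someI)
  qed
  then have step: "\<And>n x. hn (step n x - x) \<le> (1/3) ^ n"
    "\<And>n x. (1/3) ^ n * cmod (\<phi> n (z n)) \<le> cmod (\<phi> n (step n x))"
    by blast+
  define X where "X = rec_nat 0 step"
  have X_Suc: "X (Suc n) = step n (X n)" for n
    by (simp add: X_def)
  obtain L where L: "\<And>n. hn (X n - L) \<le> 1 * (1/3) ^ n / (1 - 1/3)"
    using geometric_steps_converge[of "1/3" X 1] step(1) by (auto simp: X_Suc)
  have "(1/3) ^ n * (cmod (\<phi> n (z n)) - fnorm (\<phi> n) / 2) \<le> cmod (\<phi> n L)" for n
  proof -
    have lin: "\<phi> n (X (Suc n)) = \<phi> n L + \<phi> n (X (Suc n) - L)"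
      using \<phi>[of n] unfolding bounded_functional_def by (metis add.commute diff_add_cancel)
    have "cmod (\<phi> n (X (Suc n) - L)) \<le> fnorm (\<phi> n) * hn (X (Suc n) - L)"
      by (rule fnorm_bound[OF \<phi>])
    also have "\<dots> \<le> fnorm (\<phi> n) * ((1/3) ^ n / 2)"
      using L[of "Suc n"] fnorm_nonneg[OF \<phi>[of n]] by (intro mult_left_mono) auto
    finally have "cmod (\<phi> n (X (Suc n) - L)) \<le> (1/3) ^ n * (fnorm (\<phi> n) / 2)"
      by (simp add: mult.commute)
    moreover have "(1/3) ^ n * cmod (\<phi> n (z n)) \<le> cmod (\<phi> n (X (Suc n)))"
      using step(2) by (simp add: X_Suc)
    moreover have "cmod (\<phi> n (X (Suc n))) \<le> cmod (\<phi> n L) + cmod (\<phi> n (X (Suc n) - L))"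
      unfolding lin by (rule norm_triangle_ineq)
    ultimately show ?thesis
      by (simp add: right_diff_distrib)
  qed
  then show ?thesis by (rule that)
qed

theorem uniform_boundedness:
  fixes \<phi> :: "'i \<Rightarrow> 'a \<Rightarrow> complex"
  assumes \<phi>: "\<And>i. i \<in> I \<Longrightarrow> bounded_functional (\<phi> i)"
    and pointwise: "\<And>x. \<exists>b. \<forall>i\<in>I. cmod (\<phi> i x) \<le> b"
  shows "\<exists>M\<ge>0. \<forall>i\<in>I. \<forall>x. cmod (\<phi> i x) \<le> M * hn x"
proof -
  have "\<exists>M. \<forall>i\<in>I. fnorm (\<phi> i) \<le> M"
  proof (rule ccontr)
    assume "\<not> ?thesis"
    then have "\<forall>n::nat. \<exists>i\<in>I. 4 ^ n < fnorm (\<phi> i)"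
      by (meson not_le)
    then obtain ii where ii: "\<And>n. ii n \<in> I" "\<And>n. 4 ^ n < fnorm (\<phi> (ii n))"
      by metis
    have "\<exists>z. hn z \<le> 1 \<and> 2/3 * fnorm (\<phi> (ii n)) < cmod (\<phi> (ii n) z)" for n
    proof -
      have "0 < fnorm (\<phi> (ii n))"
        using ii(2)[of n] by (smt (verit) zero_less_power)
      then have "2/3 * fnorm (\<phi> (ii n)) < fnorm (\<phi> (ii n))"
        by simp
      then obtain z where "hn z \<le> 1" "2/3 * fnorm (\<phi> (ii n)) < cmod (\<phi> (ii n) z)"
        by (rule fnorm_approx[OF \<phi>[OF ii(1)]])
      then show ?thesis by blast
    qed
    then obtain z where z: "\<And>n. hn (z n) \<le> 1"
      "\<And>n. 2/3 * fnorm (\<phi> (ii n)) < cmod (\<phi> (ii n) (z n))"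
      by metis
    obtain L where L: "\<And>n. (1/3) ^ n * (cmod (\<phi> (ii n) (z n)) - fnorm (\<phi> (ii n)) / 2)
        \<le> cmod (\<phi> (ii n) L)"
      using sokal_sequence[of "\<lambda>n. \<phi> (ii n)" z] \<phi>[OF ii(1)] z(1) by blast
    obtain b where b: "\<And>i. i \<in> I \<Longrightarrow> cmod (\<phi> i L) \<le> b"
      using pointwise[of L] by blast
    have grows: "(4/3) ^ n / 6 \<le> b" for n
    proof -
      have "(4/3::real) ^ n / 6 = (1/3) ^ n * (4 ^ n / 6)"
        by (simp add: power_divide)
      also have "\<dots> \<le> (1/3) ^ n * (fnorm (\<phi> (ii n)) / 6)"
        using ii(2)[of n] by (intro mult_left_mono) auto
      also have "\<dots> \<le> (1/3) ^ n * (cmod (\<phi> (ii n) (z n)) - fnorm (\<phi> (ii n)) / 2)"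
        using z(2)[of n] by (intro mult_left_mono) auto
      also have "\<dots> \<le> b"
        using L[of n] b[OF ii(1)[of n]] by linarith
      finally show ?thesis .
    qed
    obtain n where "6 * \<bar>b\<bar> < (4/3::real) ^ n"
      using real_arch_pow[of "4/3" "6 * \<bar>b\<bar>"] by auto
    then show False
      using grows[of n] abs_ge_self[of b] by linarith
  qed
  then obtain M where M: "\<And>i. i \<in> I \<Longrightarrow> fnorm (\<phi> i) \<le> M"
    by blast
  have "cmod (\<phi> i x) \<le> max M 0 * hn x" if "i \<in> I" for i x
    using fnorm_bound[OF \<phi>[OF that], of x] M[OF that] by (smt (verit) hn_nonneg mult_right_mono)
  then show ?thesis
    by (intro exI[of _ "max M 0"]) auto
qed

section \<open>Boundedness from weak bounds\<close>

lemma hn_le_by_dense: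
  assumes dense: "dense_in ip D" and K: "0 \<le> K"
    and dual: "\<And>d. d \<in> D \<Longrightarrow> cmod (ip v d) \<le> K * hn d"
  shows "hn v \<le> K"
proof -
  have "(hn v)\<^sup>2 \<le> K * hn v"
  proof (rule field_le_epsilon)
    fix e :: real assume e: "0 < e"
    define k where "k = hn v + K + 1"
    have k: "0 < k"
      unfolding k_def using K hn_nonneg[of v] by linarith
    obtain d where d: "d \<in> D" "hn (v - d) < e / k"
      using dense e k unfolding dense_in_def by (meson divide_pos_pos)
    have "ip v v = ip v (v - d) + ip v d"
      by (simp add: ip_diff_r)
    then have "cmod (ip v v) \<le> cmod (ip v (v - d)) + cmod (ip v d)"
      by (metis norm_triangle_ineq)
    also have "cmod (ip v (v - d)) \<le> hn v * hn (v - d)"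
      by (rule cauchy_schwarz)
    also have "cmod (ip v d) \<le> K * hn d"
      by (rule dual[OF d(1)])
    also have "hn d \<le> hn v + hn (v - d)"
      using hn_triangle[of v "- (v - d)"] hn_minus[of "v - d"] by simp
    finally have "cmod (ip v v) \<le> hn v * hn (v - d) + K * (hn v + hn (v - d))"
      using K by (simp add: mult_left_mono)
    also have "\<dots> = K * hn v + (hn v + K) * hn (v - d)"
      by (simp add: algebra_simps)
    also have "(hn v + K) * hn (v - d) \<le> k * hn (v - d)"
      unfolding k_def by (simp add: mult_right_mono)
    also have "k * hn (v - d) \<le> e"
      using d(2) k by (simp add: field_simps)
    finally show "(hn v)\<^sup>2 \<le> K * hn v + e"
      unfolding ip_self_hn norm_of_real by simp
  qed
  then show ?thesis
    using K hn_nonneg[of v] by (cases "hn v = 0") (simp_all add: power2_eq_square)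
qed

text \<open>An everywhere defined linear map that is weakly bounded against a dense, scaling
  invariant set of vectors is bounded (uniform boundedness plus density).\<close>
lemma weakly_bounded_imp_bounded:
  fixes F :: "'a \<Rightarrow> 'a"
  assumes add: "\<And>x y. F (x + y) = F x + F y" and hom: "\<And>a x. F (sc a x) = sc a (F x)"
    and scale: "\<And>a y. y \<in> D \<Longrightarrow> sc a y \<in> D" and dense: "dense_in ip D"
    and weak: "\<And>y. y \<in> D \<Longrightarrow> \<exists>c. \<forall>x. cmod (ip (F x) y) \<le> c * hn x"
  shows "\<exists>M\<ge>0. \<forall>x. hn (F x) \<le> M * hn x"
proof -
  let ?I = "{y\<in>D. hn y \<le> 1}"
  have "\<exists>M\<ge>0. \<forall>y\<in>?I. \<forall>x. cmod (ip (F x) y) \<le> M * hn x"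
  proof (rule uniform_boundedness)
    show "bounded_functional (\<lambda>x. ip (F x) y)" if "y \<in> ?I" for y
      unfolding bounded_functional_def using weak that by (simp add: add hom ip_add_l ip_sc_l)
    show "\<exists>b. \<forall>y\<in>?I. cmod (ip (F x) y) \<le> b" for x
    proof (intro exI ballI)
      fix y assume y: "y \<in> ?I"
      have "cmod (ip (F x) y) \<le> hn (F x) * hn y" by (rule cauchy_schwarz)
      also have "\<dots> \<le> hn (F x)" using y by (simp add: mult_left_le)
      finally show "cmod (ip (F x) y) \<le> hn (F x)" .
    qed
  qed
  then obtain M where M0: "M \<ge> 0"
    and M: "\<And>y x. y \<in> D \<Longrightarrow> hn y \<le> 1 \<Longrightarrow> cmod (ip (F x) y) \<le> M * hn x"
    by auto
  have scaled: "cmod (ip (F x) y) \<le> M * hn x * hn y" if y: "y \<in> D" for x y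
  proof (cases "y = 0")
    case True
    then show ?thesis by simp
  next
    case False
    have "cmod (ip (F x) (sc (of_real (1 / hn y)) y)) \<le> M * hn x"
      using M scale y hn_normalize[OF False] by simp
    then have "cmod (ip (F x) y) / hn y \<le> M * hn x"
      using hn_pos[OF False] by (simp add: ip_sc_r norm_mult norm_divide)
    then show ?thesis
      using hn_pos[OF False] by (simp add: divide_le_eq mult.commute mult.left_commute)
  qed
  have "hn (F x) \<le> M * hn x" for x
    using hn_le_by_dense[OF dense _ scaled] M0 by simp
  then show ?thesis
    using M0 by blast
qed

section \<open>Linear operators as graphs\<close>

lemma lo_zero: "linear_op sc S \<Longrightarrow> (0, 0) \<in> S"
  and lo_add: "linear_op sc S \<Longrightarrow> (x, y) \<in> S \<Longrightarrow> (u, v) \<in> S \<Longrightarrow> (x + u, y + v) \<in> S"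
  and lo_sc: "linear_op sc S \<Longrightarrow> (x, y) \<in> S \<Longrightarrow> (sc a x, sc a y) \<in> S"
  and lo_fun: "linear_op sc S \<Longrightarrow> (x, y) \<in> S \<Longrightarrow> (x, z) \<in> S \<Longrightarrow> y = z"
  unfolding linear_op_def by blast+

lemma lo_diff: "linear_op sc S \<Longrightarrow> (x, y) \<in> S \<Longrightarrow> (u, v) \<in> S \<Longrightarrow> (x - u, y - v) \<in> S"
  using lo_add[of S x y "- u" "- v"] lo_sc[of S u v "-1"] by simp

lemma lo_inj:
  "linear_op sc S \<Longrightarrow> (\<And>x. (x, 0) \<in> S \<Longrightarrow> x = 0) \<Longrightarrow> (x1, y) \<in> S \<Longrightarrow> (x2, y) \<in> S \<Longrightarrow> x1 = x2"
  using lo_diff[of S x1 y x2 y] by force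

lemma mem_shift: "(x, w) \<in> op_shift sc S l \<longleftrightarrow> (x, w + sc l x) \<in> S"
  unfolding op_shift_def by (auto intro!: exI[of _ x] exI[of _ "w + sc l x"])

lemma boundedly_invertible_iff: "boundedly_invertible sc ip S \<longleftrightarrow> has_bounded_inverse ip S"
proof -
  have "op_shift sc S 0 = S" by (auto simp: mem_shift)
  then show ?thesis
    unfolding boundedly_invertible_def resolvent_set_def by simp
qed

lemma linear_shift:
  assumes "linear_op sc S"
  shows "linear_op sc (op_shift sc S l)"
  unfolding linear_op_def mem_shift
proof (intro conjI allI impI)
  show "(0, 0 + sc l 0) \<in> S"
    using lo_zero[OF assms] by simp
  fix x y u v assume "(x, y + sc l x) \<in> S" "(u, v + sc l u) \<in> S"
  from lo_add[OF assms this] show "(x + u, y + v + sc l (x + u)) \<in> S"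
    by (simp add: algebra_simps)
next
  fix a x y assume "(x, y + sc l x) \<in> S"
  from lo_sc[OF assms this, of a] show "(sc a x, sc a y + sc l (sc a x)) \<in> S"
    by (simp add: vs.scale_right_distrib mult.commute)
next
  fix x y z assume "(x, y + sc l x) \<in> S" "(x, z + sc l x) \<in> S"
  from lo_fun[OF assms this] show "y = z" by simp
qed

lemma linear_mult:
  assumes A: "linear_op sc A" and B: "linear_op sc B"
  shows "linear_op sc (op_mult A B)"
  unfolding linear_op_def op_mult_def
proof (intro conjI allI impI; clarsimp)
  show "\<exists>y. (0, y) \<in> B \<and> (y, 0) \<in> A"
    using lo_zero[OF A] lo_zero[OF B] by blast
next
  fix x y u v p q
  assume "(x, p) \<in> B" "(p, y) \<in> A" "(u, q) \<in> B" "(q, v) \<in> A"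
  then show "\<exists>w. (x + u, w) \<in> B \<and> (w, y + v) \<in> A"
    using lo_add[OF A] lo_add[OF B] by blast
next
  fix a x y p assume "(x, p) \<in> B" "(p, y) \<in> A"
  then show "\<exists>w. (sc a x, w) \<in> B \<and> (w, sc a y) \<in> A"
    using lo_sc[OF A] lo_sc[OF B] by blast
next
  fix x y z p q assume "(x, p) \<in> B" "(p, y) \<in> A" "(x, q) \<in> B" "(q, z) \<in> A"
  then show "y = z"
    using lo_fun[OF A] lo_fun[OF B] by metis
qed

lemma inverse_map:
  assumes T: "linear_op sc T" and ker: "\<And>x. (x, 0) \<in> T \<Longrightarrow> x = 0"
    and surj: "Range T = UNIV"
  obtains R where "\<And>z. (R z, z) \<in> T"
    "\<And>x y. R (x + y) = R x + R y" "\<And>a x. R (sc a x) = sc a (R x)"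
proof -
  define R where "R z = (SOME x. (x, z) \<in> T)" for z
  have R: "(R z, z) \<in> T" for z
    unfolding R_def using surj by (metis Range_iff UNIV_I someI_ex)
  have unique: "x = R z" if "(x, z) \<in> T" for x z
    using lo_inj[OF T ker that R] .
  show ?thesis
  proof (rule that[of R])
    show "R (x + y) = R x + R y" for x y
      using unique[OF lo_add[OF T R R]] by simp
    show "R (sc a x) = sc a (R x)" for a x
      using unique[OF lo_sc[OF T R]] by simp
  qed (rule R)
qed

lemma bounded_inverse_const:
  assumes "has_bounded_inverse ip T"
  obtains C where "C \<ge> 0" "\<And>x y. (x, y) \<in> T \<Longrightarrow> hn x \<le> C * hn y"
proof -
  obtain C where C: "\<And>x y. (x, y) \<in> T \<Longrightarrow> hn x \<le> C * hn y"
    using assms unfolding has_bounded_inverse_def by blast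
  have "hn x \<le> max C 0 * hn y" if "(x, y) \<in> T" for x y
    using order_trans[OF C[OF that] mult_right_mono[of C "max C 0" "hn y"]] by simp
  then show ?thesis
    using that[of "max C 0"] by simp
qed

lemma bounded_inverse_kernel:
  "linear_op sc T \<Longrightarrow> has_bounded_inverse ip T \<Longrightarrow> (x, 0) \<in> T \<Longrightarrow> x = 0"
  using lo_zero unfolding has_bounded_inverse_def by blast

lemma bounded_inverse_intro:
  assumes T: "linear_op sc T" and ker: "\<And>x. (x, 0) \<in> T \<Longrightarrow> x = 0"
    and X: "\<And>z. (X z, z) \<in> T" and bound: "\<And>z. hn (X z) \<le> K * hn z"
  shows "has_bounded_inverse ip T"
  unfolding has_bounded_inverse_def
proof (intro conjI)
  show "\<forall>x1 x2 y. (x1, y) \<in> T \<longrightarrow> (x2, y) \<in> T \<longrightarrow> x1 = x2"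
    using lo_inj[OF T ker] by blast
  show "Range T = UNIV"
    using X by blast
  have "hn x \<le> K * hn y" if "(x, y) \<in> T" for x y
    using lo_inj[OF T ker that X] bound by simp
  then show "\<exists>C. \<forall>x y. (x, y) \<in> T \<longrightarrow> hn x \<le> C * hn y"
    by blast
qed

lemma bounded_inverse_map:
  assumes T: "linear_op sc T" and h: "has_bounded_inverse ip T"
  obtains R C where "\<And>z. (R z, z) \<in> T" "\<And>x y. R (x + y) = R x + R y"
    "\<And>a x. R (sc a x) = sc a (R x)" "C \<ge> 0" "\<And>z. hn (R z) \<le> C * hn z"
proof -
  obtain C where C: "C \<ge> 0" "\<And>x y. (x, y) \<in> T \<Longrightarrow> hn x \<le> C * hn y"
    using bounded_inverse_const[OF h] by blast
  obtain R where R: "\<And>z. (R z, z) \<in> T" "\<And>x y. R (x + y) = R x + R y"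
    "\<And>a x. R (sc a x) = sc a (R x)"
    using inverse_map[OF T bounded_inverse_kernel[OF T h]] h
    unfolding has_bounded_inverse_def by blast
  show ?thesis
    using that[OF R C(1)] C(2)[OF R(1)] by blast
qed

lemma compose_map:
  assumes B: "linear_op sc B" and add: "\<And>x y. R (x + y) = R x + R y"
    and hom: "\<And>a x. R (sc a x) = sc a (R x)" and dom: "\<And>w. \<exists>s. (R w, s) \<in> B"
  obtains F where "\<And>w. (R w, F w) \<in> B" "\<And>x y. F (x + y) = F x + F y"
    "\<And>a x. F (sc a x) = sc a (F x)"
proof -
  define F where "F w = (SOME s. (R w, s) \<in> B)" for w
  have F: "(R w, F w) \<in> B" for w
    unfolding F_def using dom by (rule someI_ex)
  show ?thesis
  proof (rule that)
    show "F (x + y) = F x + F y" for x y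
      using lo_fun[OF B F[of "x + y"]] lo_add[OF B F[of x] F[of y]] add by simp
    show "F (sc a x) = sc a (F x)" for a x
      using lo_fun[OF B F[of "sc a x"]] lo_sc[OF B F[of x]] hom by simp
  qed (rule F)
qed

section \<open>Selfadjoint operators\<close>

lemma sa_lin: "selfadjoint sc ip S \<Longrightarrow> linear_op sc S"
  and sa_dense: "selfadjoint sc ip S \<Longrightarrow> dense_in ip (Domain S)"
  unfolding selfadjoint_def by blast+

lemma sa_sym:
  assumes "selfadjoint sc ip S" "(x, a) \<in> S" "(y, b) \<in> S"
  shows "ip a y = ip x b"
proof -
  have "(y, b) \<in> adjoint ip S"
    using assms unfolding selfadjoint_def by simp
  then show ?thesis
    using assms(2) unfolding adjoint_def by blast
qed

lemma sa_dom_sc: "selfadjoint sc ip S \<Longrightarrow> y \<in> Domain S \<Longrightarrow> sc a y \<in> Domain S"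
  using lo_sc[OF sa_lin] by blast

text \<open>A selfadjoint B composed with a bounded linear map R, when everywhere defined, is bounded:
  the composition is weakly bounded against the dense domain of B, since (B R x, y) = (R x, B y).\<close>
lemma sa_comp_bounded:
  assumes B: "selfadjoint sc ip B" and add: "\<And>x y. R (x + y) = R x + R y"
    and hom: "\<And>a x. R (sc a x) = sc a (R x)" and dom: "\<And>w. \<exists>s. (R w, s) \<in> B"
    and C: "C \<ge> 0" "\<And>z. hn (R z) \<le> C * hn z"
  obtains F M where "\<And>w. (R w, F w) \<in> B" "M \<ge> 0" "\<And>w. hn (F w) \<le> M * hn w"
proof -
  obtain F where F: "\<And>w. (R w, F w) \<in> B" "\<And>x y. F (x + y) = F x + F y"
    "\<And>a x. F (sc a x) = sc a (F x)"
    using compose_map[OF sa_lin[OF B] add hom dom] by blast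
  have "\<exists>M\<ge>0. \<forall>x. hn (F x) \<le> M * hn x"
  proof (rule weakly_bounded_imp_bounded[OF F(2,3) sa_dom_sc[OF B] sa_dense[OF B]])
    fix y assume "y \<in> Domain B"
    then obtain b where b: "(y, b) \<in> B" by blast
    have "cmod (ip (F x) y) \<le> C * hn b * hn x" for x
    proof -
      have "cmod (ip (F x) y) = cmod (ip (R x) b)"
        using sa_sym[OF B F(1) b] by simp
      also have "\<dots> \<le> hn (R x) * hn b"
        by (rule cauchy_schwarz)
      also have "\<dots> \<le> C * hn x * hn b"
        using C(2) by (simp add: mult_right_mono)
      finally show ?thesis
        by (simp add: mult_ac)
    qed
    then show "\<exists>c. \<forall>x. cmod (ip (F x) y) \<le> c * hn x" by blast
  qed
  then show ?thesis
    using that F(1) by blast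
qed

text \<open>A surjective selfadjoint operator is boundedly invertible: its kernel is orthogonal to its
  range, and its inverse is symmetric, hence weakly bounded, hence bounded.\<close>
lemma sa_surj_bounded_inverse:
  assumes S: "selfadjoint sc ip S" and surj: "Range S = UNIV"
  shows "has_bounded_inverse ip S"
proof -
  have lin: "linear_op sc S" by (rule sa_lin[OF S])
  have ker: "x = 0" if "(x, 0) \<in> S" for x
  proof -
    obtain u where "(u, x) \<in> S"
      using surj by (metis Range_iff UNIV_I)
    from sa_sym[OF S this that] have "ip x x = 0" by simp
    then show ?thesis by (rule ip_self_eq_0)
  qed
  obtain R where R: "\<And>z. (R z, z) \<in> S" "\<And>x y. R (x + y) = R x + R y"
    "\<And>a x. R (sc a x) = sc a (R x)"
    using inverse_map[OF lin ker surj] by blast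
  have "\<exists>M\<ge>0. \<forall>x. hn (R x) \<le> M * hn x"
  proof (rule weakly_bounded_imp_bounded[OF R(2,3), of UNIV])
    show "dense_in ip UNIV"
      unfolding dense_in_def by (metis UNIV_I diff_self hn_0)
    fix y :: 'a
    have "cmod (ip (R x) y) \<le> hn (R y) * hn x" for x
      using sa_sym[OF S R(1)[of x] R(1)[of y]] cauchy_schwarz[of x "R y"] by (simp add: mult_ac)
    then show "\<exists>c. \<forall>x. cmod (ip (R x) y) \<le> c * hn x" by blast
  qed simp
  then obtain M where "\<And>x. hn (R x) \<le> M * hn x" by blast
  then show ?thesis
    using bounded_inverse_intro[OF lin ker R(1)] by blast
qed

section \<open>Products of operators\<close>

lemma product_bounded_inverse:
  assumes hA: "has_bounded_inverse ip A" and hB: "has_bounded_inverse ip B"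
  shows "has_bounded_inverse ip (op_mult A B)"
proof -
  obtain CA where CA: "CA \<ge> 0" "\<And>x y. (x, y) \<in> A \<Longrightarrow> hn x \<le> CA * hn y"
    using bounded_inverse_const[OF hA] by blast
  obtain CB where CB: "CB \<ge> 0" "\<And>x y. (x, y) \<in> B \<Longrightarrow> hn x \<le> CB * hn y"
    using bounded_inverse_const[OF hB] by blast
  have iA: "\<And>x1 x2 y. (x1, y) \<in> A \<Longrightarrow> (x2, y) \<in> A \<Longrightarrow> x1 = x2" and rA: "Range A = UNIV"
    using hA unfolding has_bounded_inverse_def by blast+
  have iB: "\<And>x1 x2 y. (x1, y) \<in> B \<Longrightarrow> (x2, y) \<in> B \<Longrightarrow> x1 = x2" and rB: "Range B = UNIV"
    using hB unfolding has_bounded_inverse_def by blast+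
  show ?thesis
    unfolding has_bounded_inverse_def
  proof (intro conjI allI impI)
    fix x1 x2 y assume "(x1, y) \<in> op_mult A B" "(x2, y) \<in> op_mult A B"
    then show "x1 = x2"
      unfolding op_mult_def using iA iB by blast
  next
    have "z \<in> Range (op_mult A B)" for z
    proof -
      obtain y where y: "(y, z) \<in> A" using rA by (metis Range_iff UNIV_I)
      obtain x where x: "(x, y) \<in> B" using rB by (metis Range_iff UNIV_I)
      show ?thesis using x y unfolding op_mult_def by blast
    qed
    then show "Range (op_mult A B) = UNIV" by blast
  next
    show "\<exists>C. \<forall>x z. (x, z) \<in> op_mult A B \<longrightarrow> hn x \<le> C * hn z"
    proof (intro exI[of _ "CB * CA"] allI impI)
      fix x z assume "(x, z) \<in> op_mult A B"
      then obtain y where y: "(x, y) \<in> B" "(y, z) \<in> A"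
        unfolding op_mult_def by blast
      have "hn x \<le> CB * hn y" by (rule CB(2)[OF y(1)])
      also have "\<dots> \<le> CB * (CA * hn z)" using CA(2)[OF y(2)] CB(1) by (rule mult_left_mono)
      finally show "hn x \<le> CB * CA * hn z" by (simp add: mult_ac)
    qed
  qed
qed

text \<open>Surjectivity of G: for z write (GA - \<mu>) x = z,
  i.e. G(Ax) = z + \<mu> x; since x \<in> dom A = ran G (A is injective), z lies in ran G.\<close>
lemma factors_bounded_inverse:
  assumes A: "selfadjoint sc ip A" and G: "selfadjoint sc ip G"
    and surj: "Range (op_mult A G) = UNIV" and mu: "\<mu> \<in> resolvent_set sc ip (op_mult G A)"
  shows "has_bounded_inverse ip A \<and> has_bounded_inverse ip G"
proof -
  have lG: "linear_op sc G" by (rule sa_lin[OF G])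
  have "Range A = UNIV"
    using surj unfolding op_mult_def by blast
  then have hA: "has_bounded_inverse ip A"
    by (rule sa_surj_bounded_inverse[OF A])
  have domA: "x \<in> Range G" if "(x, a) \<in> A" for x a
  proof -
    obtain u v where "(u, v) \<in> G" "(v, a) \<in> A"
      using surj unfolding op_mult_def by blast
    moreover have "v = x"
      using hA \<open>(v, a) \<in> A\<close> that unfolding has_bounded_inverse_def by blast
    ultimately show ?thesis by blast
  qed
  have "z \<in> Range G" for z
  proof -
    have "Range (op_shift sc (op_mult G A) \<mu>) = UNIV"
      using mu unfolding resolvent_set_def has_bounded_inverse_def by blast
    then obtain x where "(x, z + sc \<mu> x) \<in> op_mult G A"
      by (metis Range_iff UNIV_I mem_shift)
    then obtain t where t: "(x, t) \<in> A" "(t, z + sc \<mu> x) \<in> G"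
      unfolding op_mult_def by blast
    obtain u where u: "(u, x) \<in> G"
      using domA[OF t(1)] by blast
    have "(t - sc \<mu> u, z + sc \<mu> x - sc \<mu> x) \<in> G"
      by (rule lo_diff[OF lG t(2) lo_sc[OF lG u]])
    then show ?thesis by auto
  qed
  then have "Range G = UNIV" by blast
  then show ?thesis
    using hA sa_surj_bounded_inverse[OF G] by blast
qed

text \<open>For l \<noteq> 0, triviality of the kernel of AB - l transfers to BA - l:
  if BAx = lx then t = Ax satisfies ABt = lt.\<close>
lemma product_shift_kernel:
  assumes lA: "linear_op sc A" and lB: "linear_op sc B" and l: "l \<noteq> 0"
    and ker: "\<And>t. (t, 0) \<in> op_shift sc (op_mult A B) l \<Longrightarrow> t = 0"
    and x: "(x, 0) \<in> op_shift sc (op_mult B A) l"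
  shows "x = 0"
proof -
  obtain t where t: "(x, t) \<in> A" "(t, sc l x) \<in> B"
    using x unfolding mem_shift op_mult_def by auto
  have "(t, sc l t) \<in> op_mult A B"
    using t(2) lo_sc[OF lA t(1)] unfolding op_mult_def by blast
  then have "t = 0"
    using ker unfolding mem_shift by simp
  then have "sc l x = 0"
    using t(2) lo_fun[OF lB _ lo_zero[OF lB]] by blast
  then show ?thesis
    using l by simp
qed

text \<open>The resolvent identity on graphs.  If (BA - \<mu>) y = z with a = Ay, and (AB - l) r = a
  with s = Br, then x = y + ((l - \<mu>) / l) (s - y) solves (BA - l) x = z.\<close>
lemma product_shift_solution:
  assumes lA: "linear_op sc A" and lB: "linear_op sc B" and l: "l \<noteq> 0"
    and ya: "(y, a) \<in> A" and az: "(a, z + sc \<mu> y) \<in> B"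
    and rs: "(r, s) \<in> B" and sa: "(s, a + sc l r) \<in> A"
  shows "(y + sc ((l - \<mu>) / l) (s - y), z) \<in> op_shift sc (op_mult B A) l"
proof -
  let ?c = "(l - \<mu>) / l"
  have "(s - y, sc l r) \<in> A"
    using lo_diff[OF lA sa ya] by simp
  then have "(sc ?c (s - y), sc (l - \<mu>) r) \<in> A"
    using lo_sc[OF lA, of "s - y" "sc l r" ?c] l by simp
  then have "(sc ?c (s - y), sc (l - \<mu>) s) \<in> op_mult B A"
    using lo_sc[OF lB rs] unfolding op_mult_def by blast
  moreover have "(y, z + sc \<mu> y) \<in> op_mult B A"
    using ya az unfolding op_mult_def by blast
  ultimately have "(y + sc ?c (s - y), z + sc \<mu> y + sc (l - \<mu>) s) \<in> op_mult B A"
    using lo_add[OF linear_mult[OF lB lA]] by metis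
  moreover have "z + sc \<mu> y + sc (l - \<mu>) s = z + sc l (y + sc ?c (s - y))"
  proof -
    have "sc l (sc ?c (s - y)) = sc (l - \<mu>) (s - y)"
      using l by simp
    then show ?thesis
      by (simp add: algebra_simps)
  qed
  ultimately show ?thesis
    unfolding mem_shift by simp
qed

text \<open>The inverse of BA - l is Q + ((l - \<mu>)/l) (B R A Q - Q) with Q = (BA - \<mu>)^{-1} and
  R = (AB - l)^{-1}; the maps A Q and B R are bounded since A and B are selfadjoint.\<close>
lemma resolvent_product_nonzero:
  assumes A: "selfadjoint sc ip A" and B: "selfadjoint sc ip B" and l0: "l \<noteq> 0"
    and l: "l \<in> resolvent_set sc ip (op_mult A B)"
    and mu: "\<mu> \<in> resolvent_set sc ip (op_mult B A)"
  shows "l \<in> resolvent_set sc ip (op_mult B A)"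
proof -
  have lA: "linear_op sc A" and lB: "linear_op sc B"
    using A B by (auto intro: sa_lin)
  have lin: "linear_op sc (op_shift sc (op_mult A B) l)" "linear_op sc (op_shift sc (op_mult B A) k)"
    for k by (intro linear_shift linear_mult lA lB)+
  have h1: "has_bounded_inverse ip (op_shift sc (op_mult A B) l)"
    and h3: "has_bounded_inverse ip (op_shift sc (op_mult B A) \<mu>)"
    using l mu unfolding resolvent_set_def by simp_all
  obtain R CR where R: "\<And>z. (R z, z) \<in> op_shift sc (op_mult A B) l"
    "\<And>x y. R (x + y) = R x + R y" "\<And>a x. R (sc a x) = sc a (R x)"
    "CR \<ge> 0" "\<And>z. hn (R z) \<le> CR * hn z"
    using bounded_inverse_map[OF lin(1) h1] by blast
  have R_mem: "\<exists>s. (R w, s) \<in> B \<and> (s, w + sc l (R w)) \<in> A" for w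
    using R(1)[of w] unfolding mem_shift op_mult_def by blast
  obtain F1 M1 where F1: "\<And>w. (R w, F1 w) \<in> B" "M1 \<ge> 0" "\<And>w. hn (F1 w) \<le> M1 * hn w"
    using sa_comp_bounded[OF B R(2,3) _ R(4,5)] R_mem by blast
  have F1A: "(F1 w, w + sc l (R w)) \<in> A" for w
    using R_mem[of w] lo_fun[OF lB F1(1)[of w]] by metis
  obtain Q CQ where Q: "\<And>z. (Q z, z) \<in> op_shift sc (op_mult B A) \<mu>"
    "\<And>x y. Q (x + y) = Q x + Q y" "\<And>a x. Q (sc a x) = sc a (Q x)"
    "CQ \<ge> 0" "\<And>z. hn (Q z) \<le> CQ * hn z"
    using bounded_inverse_map[OF lin(2) h3] by blast
  have Q_mem: "\<exists>t. (Q z, t) \<in> A \<and> (t, z + sc \<mu> (Q z)) \<in> B" for z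
    using Q(1)[of z] unfolding mem_shift op_mult_def by blast
  obtain F2 M2 where F2: "\<And>w. (Q w, F2 w) \<in> A" "M2 \<ge> 0" "\<And>w. hn (F2 w) \<le> M2 * hn w"
    using sa_comp_bounded[OF A Q(2,3) _ Q(4,5)] Q_mem by blast
  have F2B: "(F2 z, z + sc \<mu> (Q z)) \<in> B" for z
    using Q_mem[of z] lo_fun[OF lA F2(1)[of z]] by metis
  define c where "c = (l - \<mu>) / l"
  define X where "X z = Q z + sc c (F1 (F2 z) - Q z)" for z
  have X: "(X z, z) \<in> op_shift sc (op_mult B A) l" for z
    using product_shift_solution[OF lA lB l0 F2(1)[of z] F2B[of z] F1(1)[of "F2 z"] F1A[of "F2 z"]]
    unfolding X_def c_def .
  have X_bound: "hn (X z) \<le> (CQ + cmod c * (M1 * M2 + CQ)) * hn z" for z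
  proof -
    have "hn (F1 (F2 z)) \<le> M1 * (M2 * hn z)"
      using F1(3)[of "F2 z"] mult_left_mono[OF F2(3)[of z] F1(2)] by linarith
    then have "hn (F1 (F2 z) - Q z) \<le> (M1 * M2 + CQ) * hn z"
      using hn_diff_le[of "F1 (F2 z)" "Q z"] Q(5)[of z] by (simp add: algebra_simps)
    then have "cmod c * hn (F1 (F2 z) - Q z) \<le> cmod c * ((M1 * M2 + CQ) * hn z)"
      by (rule mult_left_mono) simp
    then show ?thesis
      using hn_triangle[of "Q z" "sc c (F1 (F2 z) - Q z)"] Q(5)[of z]
      unfolding X_def hn_sc by (simp add: algebra_simps)
  qed
  have ker: "x = 0" if "(x, 0) \<in> op_shift sc (op_mult B A) l" for x
    using product_shift_kernel[OF lA lB l0 bounded_inverse_kernel[OF lin(1) h1] that] .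
  show ?thesis
    unfolding resolvent_set_def using bounded_inverse_intro[OF lin(2) ker X X_bound] by simp
qed

lemma product_invertibility:
  assumes A: "selfadjoint sc ip A" and G: "selfadjoint sc ip G"
    and mu: "\<mu> \<in> resolvent_set sc ip (op_mult G A)"
  shows "(boundedly_invertible sc ip (op_mult A G) \<longleftrightarrow> Range (op_mult A G) = UNIV)
    \<and> (Range (op_mult A G) = UNIV \<longleftrightarrow>
        boundedly_invertible sc ip A \<and> boundedly_invertible sc ip G)"
  using factors_bounded_inverse[OF A G _ mu] product_bounded_inverse[of A G]
  unfolding boundedly_invertible_iff has_bounded_inverse_def by blast

lemma resolvent_product_subset:
  assumes A: "selfadjoint sc ip A" and G: "selfadjoint sc ip G"
    and mu: "\<mu> \<in> resolvent_set sc ip (op_mult G A)"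
  shows "resolvent_set sc ip (op_mult A G) \<subseteq> resolvent_set sc ip (op_mult G A)"
proof
  fix l assume l: "l \<in> resolvent_set sc ip (op_mult A G)"
  show "l \<in> resolvent_set sc ip (op_mult G A)"
  proof (cases "l = 0")
    case True
    then have "boundedly_invertible sc ip A \<and> boundedly_invertible sc ip G"
      using l product_invertibility[OF A G mu] unfolding boundedly_invertible_def by blast
    then have "boundedly_invertible sc ip (op_mult G A)"
      using product_bounded_inverse unfolding boundedly_invertible_iff by blast
    then show ?thesis
      using True unfolding boundedly_invertible_def by simp
  next
    case False
    show ?thesis by (rule resolvent_product_nonzero[OF A G False l mu])
  qed
qed

end

theorem propositionp:
  fixes sc :: "complex \<Rightarrow> 'a::ab_group_add \<Rightarrow> 'a"
    and ip :: "'a \<Rightarrow> 'a \<Rightarrow> complex"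
    and A G :: "('a \<times> 'a) set"
  assumes "chilbert sc ip"
    and "selfadjoint sc ip A" and "selfadjoint sc ip G"
    and "resolvent_set sc ip (op_mult A G) \<noteq> {}"
    and "resolvent_set sc ip (op_mult G A) \<noteq> {}"
  shows "(boundedly_invertible sc ip (op_mult A G) \<longleftrightarrow> Range (op_mult A G) = UNIV)
       \<and> (Range (op_mult A G) = UNIV \<longleftrightarrow> boundedly_invertible sc ip (op_mult G A))
       \<and> (boundedly_invertible sc ip (op_mult G A) \<longleftrightarrow> Range (op_mult G A) = UNIV)
       \<and> (Range (op_mult G A) = UNIV \<longleftrightarrow>
            boundedly_invertible sc ip A \<and> boundedly_invertible sc ip G)
       \<and> spectrum_op sc ip (op_mult A G) = spectrum_op sc ip (op_mult G A)"
proof -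
  interpret chilbert_space sc ip
    by (rule chilbert_space.intro) (rule assms(1))
  note A = assms(2) and G = assms(3)
  obtain \<nu> where nu: "\<nu> \<in> resolvent_set sc ip (op_mult A G)"
    using assms(4) by blast
  obtain \<mu> where mu: "\<mu> \<in> resolvent_set sc ip (op_mult G A)"
    using assms(5) by blast
  have "resolvent_set sc ip (op_mult A G) = resolvent_set sc ip (op_mult G A)"
    using resolvent_product_subset[OF A G mu] resolvent_product_subset[OF G A nu] by blast
  then show ?thesis
    using product_invertibility[OF A G mu] product_invertibility[OF G A nu]
    unfolding spectrum_op_def by blast
qed

end
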